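(* Let $k^2$ be a constant and consider the system $$\rho_t+(\rho u)_x=0,\qquad (\rho u)_t+(\rho u^2)_x=\sigma_x,\qquad \sigma_t+u\sigma_x=k^2u_x.$$ For any integer $p$ there is a solution of this system up to $e^{-p}$ in the sense of $\mathbf{R}\langle\varepsilon\rangle$-distributions of the form $$u=u_0+\Delta u\,U\!\left(\tfrac{x-vt}{\varepsilon}\right),\quad \rho=\rho_0+\Delta\rho\,R\!\left(\tfrac{x-vt}{\varepsilon}\right),\quad \sigma=\sigma_0+\Delta\sigma\,\Sigma\!\left(\tfrac{x-vt}{\varepsilon}\right),$$ where $u_0,\Delta u,\rho_0,\Delta\rho,\sigma_0,\Delta\sigma,v$ are real, $\Delta u,\Delta\rho,\Delta\sigma\neq0$, and $U,R,\Sigma$ are primitives $U(x)=\int_{-\infty}^x\widetilde U$, $R(x)=\int_{-\infty}^x\widetilde R$, $\Sigma(x)=\int_{-\infty}^x\widetilde\Sigma$ of functions $\widetilde U,\widetilde R,\widetilde\Sigma\in\mathcal{S}(\mathbf{R})$ each with total integral $1$; that is, for every $t\in[0,T]$ and every $\psi\in\mathcal{S}(\mathbf{R})$ the integrals $$\int\{\rho_t+\rho_xu+\rho u_x\}\psi\,dx,\quad \int\{\rho_tu+\rho u_t+\rho_xu^2+2\rho uu_x-\sigma_x\}\psi\,dx,\quad \int\{\sigma_t+u\sigma_x-k^2u_x\}\psi\,dx$$ are each of the form $\sum_{k=p}^\infty\zeta_k\varepsilon^k$ in $\mathbf{R}\langle\varepsilon\rangle$. Moreover, $$\rho_0(\Delta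 u)^2(\rho_0+\Delta\rho)+\Delta\sigma\,\Delta\rho=0,\qquad \Delta\sigma\left(\rho_0+\tfrac12\Delta\rho\right)+k^2\Delta\rho=0,\qquad v=u_0+\Delta u+\rho_0\frac{\Delta u}{\Delta\rho}.$$
   Context: $\mathbf{R}\langle\varepsilon\rangle$ is the field of formal Laurent series $\sum_{n\ge 0}\xi_{n+k}\varepsilon^{n+k}$ ($k\in\mathbf{Z}$, $\xi_i\in\mathbf{R}$) with the non-Archimedean norm $|x|_\nu=e^{-\nu(x)}$, where $\nu(x)$ is the lowest exponent with nonzero coefficient. Integrals depending on $\varepsilon\in(0,1]$ are regarded as elements of $\mathbf{R}\langle\varepsilon\rangle$ via their expansions in powers of $\varepsilon$; "up to $e^{-p}$" means these elements only contain powers $\varepsilon^k$ with $k\ge p$. $T>0$ is a fixed time horizon and $\mathcal{S}(\mathbf{R})$ is the Schwartz space. Here $\rho$ is density, $u$ velocity and $\sigma$ stress of a medium. *)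

theory Defs
  imports "HOL-Analysis.Analysis" "HOL-Library.Landau_Symbols"
begin

definition schwartz :: "(real \<Rightarrow> real) \<Rightarrow> bool" where
  "schwartz f \<longleftrightarrow>
     (\<forall>n x. ((deriv ^^ n) f) differentiable (at x)) \<and>
     (\<forall>m n. \<exists>C. \<forall>x. \<bar>x\<bar> ^ m * \<bar>(deriv ^^ n) f x\<bar> \<le> C)"

definition prim :: "(real \<Rightarrow> real) \<Rightarrow> real \<Rightarrow> real" where
  "prim f x = integral {..x} f"

definition pdt :: "(real \<Rightarrow> real \<Rightarrow> real) \<Rightarrow> real \<Rightarrow> real \<Rightarrow> real" where
  "pdt f t x = deriv (\<lambda>s. f s x) t"

definition pdx :: "(real \<Rightarrow> real \<Rightarrow> real) \<Rightarrow> real \<Rightarrow> real \<Rightarrow> real" where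
  "pdx f t x = deriv (\<lambda>y. f t y) x"

text \<open>An epsilon-dependent quantity I, regarded as an element of the Laurent series field
  via its asymptotic expansion in powers of epsilon as epsilon tends to 0+, contains only
  powers epsilon^k with k at least p.\<close>
definition eps_expansion_from :: "int \<Rightarrow> (real \<Rightarrow> real) \<Rightarrow> bool" where
  "eps_expansion_from p I \<longleftrightarrow>
     (\<exists>\<zeta> :: int \<Rightarrow> real. \<forall>N\<ge>p.
        (\<lambda>\<epsilon>. I \<epsilon> - (\<Sum>j\<in>{p..N}. \<zeta> j * \<epsilon> powi j)) \<in> O[at_right 0](\<lambda>\<epsilon>. \<epsilon> powi (N + 1)))"

end

(* The travelling waves are built from bump trains: sums of n shifted copies of one smooth bump
   with the weights of an n-th finite difference, so that all trains have the same moments of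
   order < n.  Five trains with disjoint supports, placed one after another, serve as the
   derivatives of the profiles U, R and Sigma.  On the support of each train every other profile
   is constant, so each weak residual is G((x - v t)/eps)/eps for a fixed linear combination G of
   the trains, and the jump conditions make its coefficients sum to zero.  Hence the moments of G
   of order < n vanish, and a Taylor expansion of the test function around v t shows that its
   pairing with the residual only contains powers eps^k with k >= n. *)

theory Submission
  imports Defs "HOL-Computational_Algebra.Polynomial"
begin

section \<open>Smooth functions\<close>

definition smooth :: "(real \<Rightarrow> real) \<Rightarrow> bool" where
  "smooth f \<longleftrightarrow> (\<forall>n x. (deriv ^^ n) f differentiable (at x))"

definition differentiable_upto :: "nat \<Rightarrow> (real \<Rightarrow> real) \<Rightarrow> bool" where
  "differentiable_upto n f \<longleftrightarrow> (\<forall>m<n. \<forall>x. (deriv ^^ m) f differentiable (at x))"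

lemma smooth_iff_differentiable_upto: "smooth f \<longleftrightarrow> (\<forall>n. differentiable_upto n f)"
  unfolding smooth_def differentiable_upto_def by (meson lessI)

lemma differentiable_upto_0 [simp]: "differentiable_upto 0 f"
  by (simp add: differentiable_upto_def)

lemma differentiable_upto_Suc:
  "differentiable_upto (Suc n) f \<longleftrightarrow>
     (\<forall>x. f differentiable (at x)) \<and> differentiable_upto n (deriv f)"
  unfolding differentiable_upto_def
  by (auto simp: less_Suc_eq_0_disj funpow_Suc_right simp del: funpow.simps)

lemma smooth_differentiable: "smooth f \<Longrightarrow> f differentiable (at x)"
  unfolding smooth_def by (metis funpow_0)

lemma smooth_deriv: "smooth f \<Longrightarrow> smooth (deriv f)"
  unfolding smooth_def by (metis funpow_Suc_right o_apply)

lemma smooth_has_derivative: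
  "smooth f \<Longrightarrow> (f has_real_derivative deriv f x) (at x)"
  by (simp add: smooth_differentiable DERIV_deriv_iff_real_differentiable)

lemma smooth_continuous_on: "smooth f \<Longrightarrow> continuous_on S ((deriv ^^ n) f)"
  unfolding smooth_def
  by (metis continuous_at_imp_continuous_on differentiable_imp_continuous_within)

lemma differentiable_upto_lincomb:
  "differentiable_upto n f \<Longrightarrow> differentiable_upto n g \<Longrightarrow>
   differentiable_upto n (\<lambda>x. a * f x + b * g x)"
proof (induction n arbitrary: f g)
  case (Suc n)
  then have df: "\<And>x. f differentiable (at x)" and dg: "\<And>x. g differentiable (at x)"
    by (simp_all add: differentiable_upto_Suc)
  have "deriv (\<lambda>x. a * f x + b * g x) = (\<lambda>x. a * deriv f x + b * deriv g x)"
    using df dg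
    by (intro ext DERIV_imp_deriv) (auto intro!: derivative_eq_intros
        simp: DERIV_deriv_iff_real_differentiable[symmetric])
  with Suc show ?case
    by (simp add: differentiable_upto_Suc df dg)
qed simp

lemma differentiable_upto_add:
  "differentiable_upto n f \<Longrightarrow> differentiable_upto n g \<Longrightarrow> differentiable_upto n (\<lambda>x. f x + g x)"
  using differentiable_upto_lincomb[of n f g 1 1] by simp

lemma differentiable_upto_const: "differentiable_upto n (\<lambda>x. c)"
  by (induction n arbitrary: c) (simp_all add: differentiable_upto_Suc)

lemma differentiable_upto_mult:
  "smooth f \<Longrightarrow> smooth g \<Longrightarrow> differentiable_upto n (\<lambda>x. f x * g x)"
proof (induction n arbitrary: f g)
  case (Suc n)
  have "deriv (\<lambda>x. f x * g x) = (\<lambda>x. deriv f x * g x + f x * deriv g x)"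
    using Suc.prems
    by (intro ext DERIV_imp_deriv) (auto intro!: derivative_eq_intros smooth_has_derivative)
  moreover have "differentiable_upto n (\<lambda>x. deriv f x * g x + f x * deriv g x)"
    using Suc by (intro differentiable_upto_add Suc.IH smooth_deriv)
  ultimately show ?case
    using Suc.prems by (simp add: differentiable_upto_Suc smooth_differentiable)
qed simp

lemma differentiable_upto_affine:
  "smooth f \<Longrightarrow> differentiable_upto n (\<lambda>x. a * f (c * x + d))"
proof (induction n arbitrary: a f)
  case (Suc n)
  have "((\<lambda>x. a * f (c * x + d)) has_real_derivative (a * c) * deriv f (c * x + d)) (at x)" for x
    using Suc.prems
    by (auto intro!: derivative_eq_intros DERIV_chain2[OF smooth_has_derivative])
  then have "deriv (\<lambda>x. a * f (c * x + d)) = (\<lambda>x. (a * c) * deriv f (c * x + d))"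
    and "\<And>x. (\<lambda>x. a * f (c * x + d)) differentiable (at x)"
    by (auto intro: DERIV_imp_deriv simp: real_differentiable_def)
  then show ?case
    using Suc by (simp add: differentiable_upto_Suc smooth_deriv)
qed simp

lemma smooth_lincomb: "smooth f \<Longrightarrow> smooth g \<Longrightarrow> smooth (\<lambda>x. a * f x + b * g x)"
  by (simp add: smooth_iff_differentiable_upto differentiable_upto_lincomb)

lemma smooth_const: "smooth (\<lambda>x. c)"
  by (simp add: smooth_iff_differentiable_upto differentiable_upto_const)

lemma smooth_add: "smooth f \<Longrightarrow> smooth g \<Longrightarrow> smooth (\<lambda>x. f x + g x)"
  by (simp add: smooth_iff_differentiable_upto differentiable_upto_add)

lemma smooth_mult: "smooth f \<Longrightarrow> smooth g \<Longrightarrow> smooth (\<lambda>x. f x * g x)"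
  by (simp add: smooth_iff_differentiable_upto differentiable_upto_mult)

lemma smooth_affine:
  assumes "smooth f"
  shows "smooth (\<lambda>x. f (c * x + d))"
  using differentiable_upto_affine[OF assms, of _ 1 c d]
  by (simp add: smooth_iff_differentiable_upto)

lemma smooth_sum:
  "finite I \<Longrightarrow> (\<And>i. i \<in> I \<Longrightarrow> smooth (f i)) \<Longrightarrow> smooth (\<lambda>x. \<Sum>i\<in>I. f i x)"
proof (induction I rule: finite_induct)
  case empty
  then show ?case using smooth_const[of 0] by simp
next
  case (insert i I)
  then show ?case by (simp add: smooth_add)
qed

section \<open>A smooth bump\<close>

definition exp_flat :: "real poly \<Rightarrow> real \<Rightarrow> real" where
  "exp_flat P x = (if x > 0 then poly P (1 / x) * exp (- 1 / x) else 0)"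

lemma poly_times_exp_minus_tendsto_0:
  "((\<lambda>z::real. poly Q z * exp (- z)) \<longlongrightarrow> 0) at_top"
proof -
  have "poly Q z * exp (- z) = (\<Sum>i\<le>degree Q. coeff Q i * (z ^ i / exp z))" for z
    by (simp add: poly_altdef sum_distrib_left sum_distrib_right exp_minus divide_inverse mult_ac)
  moreover have "((\<lambda>z. \<Sum>i\<le>degree Q. coeff Q i * (z ^ i / exp z)) \<longlongrightarrow>
                   (\<Sum>i\<le>degree Q. coeff Q i * 0)) at_top"
    by (intro tendsto_sum tendsto_mult tendsto_const tendsto_power_div_exp_0)
  ultimately show ?thesis by simp
qed

lemma exp_flat_has_derivative:
  "(exp_flat P has_real_derivative exp_flat ([:0, 0, 1:] * (P - pderiv P)) x) (at x)"
proof (cases x "0 :: real" rule: linorder_cases)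
  case less
  have "(exp_flat P has_real_derivative 0) (at x)"
    by (rule has_field_derivative_transform_within_open[OF DERIV_const, where S="{..<0}"])
       (use less in \<open>auto simp: exp_flat_def\<close>)
  then show ?thesis
    using less by (simp add: exp_flat_def)
next
  case equal
  have "((\<lambda>y. poly (pCons 0 P) (inverse y) * exp (- inverse y)) \<longlongrightarrow> 0) (at_right 0)"
    using filterlim_compose[OF poly_times_exp_minus_tendsto_0 filterlim_inverse_at_top_right]
    by (simp del: poly_pCons)
  then have "((\<lambda>y. exp_flat P y / y) \<longlongrightarrow> 0) (at_right 0)"
    by (rule Lim_transform_eventually)
       (auto simp: eventually_at_right_field exp_flat_def field_simps intro!: exI[of _ 1])
  moreover have "((\<lambda>y. exp_flat P y / y) \<longlongrightarrow> 0) (at_left 0)"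
    by (rule Lim_transform_eventually[OF tendsto_const])
       (auto simp: eventually_at_left_field exp_flat_def intro!: exI[of _ "-1"])
  ultimately show ?thesis
    using equal by (simp add: has_field_derivative_iff exp_flat_def filterlim_at_split)
next
  case greater
  \<comment> \<open>the derivative of \<open>p(1/x) e^(-1/x)\<close> is \<open>(p - p')(1/x) e^(-1/x) / x\<^sup>2\<close>\<close>
  have "((\<lambda>y. poly P (1 / y) * exp (- 1 / y)) has_real_derivative
          exp_flat ([:0, 0, 1:] * (P - pderiv P)) x) (at x)"
    using greater
    by (auto intro!: derivative_eq_intros DERIV_chain2[OF poly_DERIV]
        simp: exp_flat_def power2_eq_square field_simps)
  then show ?thesis
    by (rule has_field_derivative_transform_within_open[where S="{0<..}"])
       (use greater in \<open>auto simp: exp_flat_def\<close>)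
qed

lemma deriv_exp_flat: "deriv (exp_flat P) = exp_flat ([:0, 0, 1:] * (P - pderiv P))"
  by (intro ext DERIV_imp_deriv exp_flat_has_derivative)

lemma smooth_exp_flat: "smooth (exp_flat P)"
proof -
  have "differentiable_upto n (exp_flat P)" for n
  proof (induction n arbitrary: P)
    case (Suc n)
    then show ?case
      using exp_flat_has_derivative
      by (auto simp: differentiable_upto_Suc deriv_exp_flat real_differentiable_def)
  qed simp
  then show ?thesis by (simp add: smooth_iff_differentiable_upto)
qed

definition bump :: "real \<Rightarrow> real" where
  "bump x = exp_flat 1 x * exp_flat 1 (1 - x)"

lemma smooth_bump: "smooth bump"
  using smooth_mult[OF smooth_exp_flat smooth_affine[OF smooth_exp_flat, of 1 "-1" 1]]
  by (simp add: bump_def[abs_def])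

definition vanishes_outside :: "(real \<Rightarrow> real) \<Rightarrow> real set \<Rightarrow> bool" where
  "vanishes_outside f S \<longleftrightarrow> (\<forall>x. x \<notin> S \<longrightarrow> f x = 0)"

lemma vanishes_outside_bump: "vanishes_outside bump {0..1}"
  by (auto simp: vanishes_outside_def bump_def exp_flat_def)

lemma integral_bump_pos: "integral {0..1} bump > 0"
proof -
  have cont: "continuous_on {0..1} bump"
    using smooth_continuous_on[OF smooth_bump, of _ 0] by simp
  have nonneg: "bump x \<ge> 0" for x
    by (simp add: bump_def exp_flat_def)
  have int: "(bump has_integral integral {0..1} bump) {0..1}"
    by (rule integrable_integral[OF integrable_continuous_interval[OF cont]])
  have "integral {0..1} bump \<noteq> 0"
  proof
    assume "integral {0..1} bump = 0"
    then have "bump (1 / 2) = 0"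
      using has_integral_0_cbox_imp_0[of 0 1 bump "1 / 2"] cont nonneg int by simp
    then show False
      by (simp add: bump_def exp_flat_def)
  qed
  moreover have "integral {0..1} bump \<ge> 0"
    by (rule integral_nonneg[OF integrable_continuous_interval[OF cont]]) (use nonneg in auto)
  ultimately show ?thesis by simp
qed

section \<open>Compact support and primitives\<close>

lemma vanishes_outside_mono:
  "vanishes_outside f S \<Longrightarrow> S \<subseteq> T \<Longrightarrow> vanishes_outside f T"
  unfolding vanishes_outside_def by auto

lemma vanishes_outside_lincomb:
  "vanishes_outside f S \<Longrightarrow> vanishes_outside g S \<Longrightarrow> vanishes_outside (\<lambda>x. a * f x + b * g x) S"
  unfolding vanishes_outside_def by auto

lemma vanishes_outside_deriv:
  assumes "vanishes_outside f {c..d}"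
  shows "vanishes_outside ((deriv ^^ n) f) {c..d}"
proof (induction n)
  case (Suc n)
  have "((deriv ^^ n) f has_real_derivative 0) (at x)" if "x \<notin> {c..d}" for x
    by (rule has_field_derivative_transform_within_open[OF DERIV_const, where S="- {c..d}"])
       (use Suc that in \<open>auto simp: vanishes_outside_def\<close>)
  then show ?case by (simp add: vanishes_outside_def DERIV_imp_deriv)
qed (use assms in simp)

lemma schwartz_if_smooth_vanishes_outside:
  assumes "smooth f" "vanishes_outside f {c..d}"
  shows "schwartz f"
  unfolding schwartz_def
proof (intro conjI allI)
  fix n x
  show "(deriv ^^ n) f differentiable (at x)" using assms(1) by (simp add: smooth_def)
next
  fix m n
  have "continuous_on {c..d} (\<lambda>x. \<bar>x\<bar> ^ m * \<bar>(deriv ^^ n) f x\<bar>)"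
    using smooth_continuous_on[OF assms(1)] by (intro continuous_intros)
  then have "bounded ((\<lambda>x. \<bar>x\<bar> ^ m * \<bar>(deriv ^^ n) f x\<bar>) ` {c..d})"
    by (intro compact_imp_bounded compact_continuous_image) auto
  then obtain B where "\<forall>x\<in>{c..d}. \<bar>x\<bar> ^ m * \<bar>(deriv ^^ n) f x\<bar> \<le> B"
    by (auto simp: bounded_iff)
  then have "\<bar>x\<bar> ^ m * \<bar>(deriv ^^ n) f x\<bar> \<le> max B 0" for x
    using vanishes_outside_deriv[OF assms(2), of n]
    by (cases "x \<in> {c..d}") (auto simp: vanishes_outside_def intro!: max.coboundedI1)
  then show "\<exists>C. \<forall>x. \<bar>x\<bar> ^ m * \<bar>(deriv ^^ n) f x\<bar> \<le> C" by blast
qed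

lemma has_integral_UNIV_if_vanishes_outside:
  fixes f :: "real \<Rightarrow> real"
  assumes "continuous_on UNIV f" "vanishes_outside f {c..d}"
  shows "(f has_integral integral {c..d} f) UNIV"
  by (rule has_integral_on_superset[OF integrable_integral])
     (use assms in \<open>auto intro: integrable_continuous_interval continuous_on_subset
        simp: vanishes_outside_def\<close>)

lemma prim_eq_integral:
  assumes "continuous_on UNIV f" "vanishes_outside f {a..}" "a \<le> x"
  shows "prim f x = integral {a..x} f"
proof -
  have "(f has_integral integral {a..x} f) {a..x}"
    by (rule integrable_integral, rule integrable_continuous_interval)
       (rule continuous_on_subset[OF assms(1)], simp)
  then have "((\<lambda>y. if y \<in> {..x} then f y else 0) has_integral integral {a..x} f) UNIV"
    by (rule has_integral_on_superset[OF has_integral_eq[rotated]])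
       (use assms(2) in \<open>auto simp: vanishes_outside_def\<close>)
  then show ?thesis
    unfolding prim_def by (rule integral_unique[OF has_integral_restrict_UNIV[THEN iffD1]])
qed

lemma prim_eq_0:
  assumes "continuous_on UNIV f" "vanishes_outside f {a..}" "x \<le> a"
  shows "prim f x = 0"
  using prim_eq_integral[OF assms(1) vanishes_outside_mono[OF assms(2)], of x x] assms(3)
  by auto

lemma prim_eq_integral_UNIV:
  assumes "continuous_on UNIV f" "vanishes_outside f {c..d}" "d \<le> x"
  shows "prim f x = integral UNIV f"
proof -
  have "(\<lambda>y. if y \<in> {..x} then f y else 0) = f"
    using assms(2,3) by (auto simp: vanishes_outside_def)
  with has_integral_UNIV_if_vanishes_outside[OF assms(1,2)]
  have "(f has_integral integral UNIV f) {..x}"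
    by (metis has_integral_restrict_UNIV integral_unique)
  then show ?thesis unfolding prim_def by (rule integral_unique)
qed

lemma prim_has_derivative:
  assumes "continuous_on UNIV f" "vanishes_outside f {a..}"
  shows "(prim f has_real_derivative f x) (at x)"
proof -
  define b where "b = min a x - 1"
  have "((\<lambda>y. integral {b..y} f) has_real_derivative f x) (at x within {b..x + 1})"
    by (rule integral_has_real_derivative[OF continuous_on_subset[OF assms(1)]])
       (auto simp: b_def)
  moreover have "x \<in> interior {b..x + 1}"
    by (simp add: b_def)
  ultimately have "((\<lambda>y. integral {b..y} f) has_real_derivative f x) (at x)"
    by (simp only: at_within_interior)
  then show ?thesis
  proof (rule has_field_derivative_transform_within_open[where S="{b<..}"])
    show "integral {b..y} f = prim f y" if "y \<in> {b<..}" for y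
      using prim_eq_integral[OF assms(1) vanishes_outside_mono[OF assms(2)], of b y] that
      by (simp add: b_def)
  qed (auto simp: b_def)
qed

lemma prim_lincomb:
  fixes f g :: "real \<Rightarrow> real"
  assumes "continuous_on UNIV f" "continuous_on UNIV g"
    and "vanishes_outside f {a..}" "vanishes_outside g {a..}"
  shows "prim (\<lambda>y. \<alpha> * f y + \<beta> * g y) x = \<alpha> * prim f x + \<beta> * prim g x"
proof -
  define b where "b = min a x"
  have vf: "vanishes_outside f {b..}" and vg: "vanishes_outside g {b..}"
    using assms(3,4) by (auto simp: b_def intro: vanishes_outside_mono)
  have int: "h integrable_on {b..x}" if "continuous_on UNIV h" for h :: "real \<Rightarrow> real"
    by (rule integrable_continuous_interval, rule continuous_on_subset[OF that]) simp
  have "prim (\<lambda>y. \<alpha> * f y + \<beta> * g y) x = integral {b..x} (\<lambda>y. \<alpha> * f y + \<beta> * g y)"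
    using assms(1,2) vanishes_outside_lincomb[OF vf vg]
    by (intro prim_eq_integral continuous_intros) (auto simp: b_def)
  also have "\<dots> = \<alpha> * integral {b..x} f + \<beta> * integral {b..x} g"
    using assms(1,2) by (subst integral_add) (auto intro!: int continuous_intros)
  also have "\<dots> = \<alpha> * prim f x + \<beta> * prim g x"
    using prim_eq_integral[OF assms(1) vf] prim_eq_integral[OF assms(2) vg] by (simp add: b_def)
  finally show ?thesis .
qed

section \<open>Expansion of rescaled pairings\<close>

lemma eps_expansion_from_cong:
  assumes "eventually (\<lambda>e. I e = J e) (at_right 0)" "eps_expansion_from p I"
  shows "eps_expansion_from p J"
proof -
  have "(\<lambda>e. I e - S e) \<in> O[at_right 0](g) \<longleftrightarrow> (\<lambda>e. J e - S e) \<in> O[at_right 0](g)" for S g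
    by (rule landau_o.big.in_cong) (use assms(1) in \<open>auto elim: eventually_mono\<close>)
  with assms(2) show ?thesis
    unfolding eps_expansion_from_def by simp
qed

lemma power_nat_le_powi: "0 < e \<Longrightarrow> e \<le> 1 \<Longrightarrow> (e::real) ^ nat k \<le> e powi k"
  by (cases "k \<ge> 0")
     (auto simp: power_int_def intro!: one_le_power one_le_inverse)

lemma eps_expansion_fromI:
  fixes I :: "real \<Rightarrow> real" and z :: "nat \<Rightarrow> real"
  assumes zero: "\<And>k. int k < p \<Longrightarrow> z k = 0"
    and bound: "\<And>K. \<exists>B. \<forall>e\<in>{0<..<1}. \<bar>I e - (\<Sum>k<K. z k * e ^ k)\<bar> \<le> B * e ^ K"
  shows "eps_expansion_from p I"
proof -
  define \<zeta> where "\<zeta> j = (if 0 \<le> j then z (nat j) else 0)" for j :: int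
  have "(\<lambda>e. I e - (\<Sum>j\<in>{p..N}. \<zeta> j * e powi j)) \<in> O[at_right 0](\<lambda>e. e powi (N + 1))" for N
  proof -
    define K where "K = nat (N + 1)"
    have "(\<Sum>j\<in>{p..N}. \<zeta> j * e powi j) = (\<Sum>k<K. z k * e ^ k)" for e
    proof -
      have "(\<Sum>j\<in>{p..N}. \<zeta> j * e powi j) = (\<Sum>j\<in>{min p 0..N}. \<zeta> j * e powi j)"
        by (rule sum.mono_neutral_left) (auto simp: \<zeta>_def zero)
      also have "\<dots> = (\<Sum>j\<in>{0..N}. \<zeta> j * e powi j)"
        by (rule sum.mono_neutral_right) (auto simp: \<zeta>_def)
      also have "{0..N} = int ` {..<K}"
        by (auto simp: K_def image_iff intro!: bexI[of _ "nat _"])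
      finally show ?thesis
        by (simp add: sum.reindex \<zeta>_def power_int_of_nat)
    qed
    moreover obtain B where B: "\<forall>e\<in>{0<..<1}. \<bar>I e - (\<Sum>k<K. z k * e ^ k)\<bar> \<le> B * e ^ K"
      using bound by blast
    moreover have "B \<ge> 0"
    proof -
      have "0 \<le> B * (1 / 2) ^ K"
        by (rule order_trans[OF abs_ge_zero]) (use B in auto)
      moreover have "(1 / 2 :: real) ^ K > 0"
        by simp
      ultimately show ?thesis
        by (metis zero_le_mult_iff not_le)
    qed
    ultimately have "\<bar>I e - (\<Sum>j\<in>{p..N}. \<zeta> j * e powi j)\<bar> \<le> B * \<bar>e powi (N + 1)\<bar>"
      if "e \<in> {0<..<1}" for e
      using that B power_nat_le_powi[of e "N + 1"]
      by (fastforce simp: K_def intro: order_trans mult_left_mono)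
    then have "eventually (\<lambda>e. norm (I e - (\<Sum>j\<in>{p..N}. \<zeta> j * e powi j))
                 \<le> B * norm (e powi (N + 1))) (at_right 0)"
      by (intro eventually_at_rightI[where b = 1]) auto
    then show ?thesis by (rule bigoI)
  qed
  then show ?thesis
    unfolding eps_expansion_from_def by blast
qed

lemma schwartz_continuous_on: "schwartz \<psi> \<Longrightarrow> continuous_on S \<psi>"
  unfolding schwartz_def
  by (metis continuous_at_imp_continuous_on differentiable_imp_continuous_within funpow_0)

lemma schwartz_taylor_bound:
  assumes "schwartz \<psi>"
  shows "\<exists>C. \<forall>z. \<bar>\<psi> (a + z) - (\<Sum>m<K. (deriv ^^ m) \<psi> a / fact m * z ^ m)\<bar> \<le> C * \<bar>z\<bar> ^ K"
proof -
  obtain C where C: "\<And>x. \<bar>(deriv ^^ K) \<psi> x\<bar> \<le> C"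
    using assms unfolding schwartz_def by (metis mult_1 power_0)
  have "((deriv ^^ m) \<psi> has_real_derivative (deriv ^^ Suc m) \<psi> x) (at x)" for m x
    using assms by (simp add: schwartz_def DERIV_deriv_iff_real_differentiable)
  then have diff: "((\<lambda>z. (deriv ^^ m) \<psi> (a + z)) has_real_derivative (deriv ^^ Suc m) \<psi> (a + z))
                    (at z)" for m z
    using DERIV_chain2[where g = "\<lambda>z. a + z"] by (fastforce intro!: derivative_eq_intros)
  have "\<bar>\<psi> (a + z) - (\<Sum>m<K. (deriv ^^ m) \<psi> a / fact m * z ^ m)\<bar> \<le> C / fact K * \<bar>z\<bar> ^ K" for z
  proof -
    have "\<exists>t. \<bar>t\<bar> \<le> \<bar>z\<bar> \<and> \<psi> (a + z) =
            (\<Sum>m<K. (deriv ^^ m) \<psi> (a + 0) / fact m * z ^ m) + (deriv ^^ K) \<psi> (a + t) / fact K * z ^ K"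
      by (rule Maclaurin_all_le) (use diff in auto)
    then obtain t where "\<psi> (a + z) =
        (\<Sum>m<K. (deriv ^^ m) \<psi> (a + 0) / fact m * z ^ m) + (deriv ^^ K) \<psi> (a + t) / fact K * z ^ K"
      by blast
    moreover have "\<bar>(deriv ^^ K) \<psi> (a + t) / fact K * z ^ K\<bar> \<le> C / fact K * \<bar>z\<bar> ^ K"
      using C[of "a + t"] by (simp add: abs_mult power_abs divide_right_mono mult_right_mono)
    ultimately show ?thesis by (simp only: add_0_right add_diff_cancel_left')
  qed
  then show ?thesis by blast
qed

lemma integral_times_taylor_polynomial:
  fixes G :: "real \<Rightarrow> real"
  assumes "continuous_on {c..d} G"
  shows "integral {c..d} (\<lambda>y. G y * (\<Sum>k<K. D k * (e * y) ^ k))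
         = (\<Sum>k<K. D k * integral {c..d} (\<lambda>y. G y * y ^ k) * e ^ k)"
proof -
  have "integral {c..d} (\<lambda>y. G y * (\<Sum>k<K. D k * (e * y) ^ k))
        = integral {c..d} (\<lambda>y. \<Sum>k<K. D k * e ^ k * (G y * y ^ k))"
    by (simp add: sum_distrib_left power_mult_distrib mult_ac)
  also have "\<dots> = (\<Sum>k<K. integral {c..d} (\<lambda>y. D k * e ^ k * (G y * y ^ k)))"
    by (rule integral_sum) (auto intro!: integrable_continuous_interval continuous_intros assms)
  finally show ?thesis
    unfolding integral_mult_right by (simp add: mult_ac)
qed

lemma moment_expansion_bound:
  fixes G \<psi> :: "real \<Rightarrow> real"
  assumes G: "continuous_on {c..d} G" and \<psi>: "schwartz \<psi>"
  shows "\<exists>B. \<forall>e>0. \<bar>integral {c..d} (\<lambda>y. G y * \<psi> (a + e * y))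
                    - (\<Sum>k<K. (deriv ^^ k) \<psi> a / fact k * integral {c..d} (\<lambda>y. G y * y ^ k) * e ^ k)\<bar>
                  \<le> B * e ^ K"
proof -
  define D where "D k = (deriv ^^ k) \<psi> a / fact k" for k
  obtain C where C: "\<And>z. \<bar>\<psi> (a + z) - (\<Sum>k<K. D k * z ^ k)\<bar> \<le> C * \<bar>z\<bar> ^ K"
    using schwartz_taylor_bound[OF \<psi>, of a K] unfolding D_def by blast
  define B where "B = C * integral {c..d} (\<lambda>y. \<bar>G y\<bar> * \<bar>y\<bar> ^ K)"
  have "\<bar>integral {c..d} (\<lambda>y. G y * \<psi> (a + e * y))
          - (\<Sum>k<K. D k * integral {c..d} (\<lambda>y. G y * y ^ k) * e ^ k)\<bar> \<le> B * e ^ K"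
    if "e > 0" for e
  proof -
    let ?R = "\<lambda>y. \<psi> (a + e * y) - (\<Sum>k<K. D k * (e * y) ^ k)"
    have cont: "continuous_on {c..d} (\<lambda>y. \<psi> (a + e * y))"
      by (intro continuous_on_compose2[OF schwartz_continuous_on[OF \<psi>]] continuous_intros) auto
    have "integral {c..d} (\<lambda>y. G y * \<psi> (a + e * y))
            - (\<Sum>k<K. D k * integral {c..d} (\<lambda>y. G y * y ^ k) * e ^ k)
          = integral {c..d} (\<lambda>y. G y * ?R y)"
      unfolding integral_times_taylor_polynomial[OF G, symmetric] right_diff_distrib
      by (rule integral_diff[symmetric])
         (auto intro!: integrable_continuous_interval continuous_intros G cont)
    moreover have "norm (integral {c..d} (\<lambda>y. G y * ?R y))
          \<le> integral {c..d} (\<lambda>y. e ^ K * (C * (\<bar>G y\<bar> * \<bar>y\<bar> ^ K)))"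
    proof (rule integral_norm_bound_integral)
      fix y
      have "\<bar>G y\<bar> * \<bar>?R y\<bar> \<le> \<bar>G y\<bar> * (C * \<bar>e * y\<bar> ^ K)"
        using C[of "e * y"] by (intro mult_left_mono) auto
      then show "norm (G y * ?R y) \<le> e ^ K * (C * (\<bar>G y\<bar> * \<bar>y\<bar> ^ K))"
        using that by (simp add: abs_mult power_mult_distrib mult_ac)
    qed (auto intro!: integrable_continuous_interval continuous_intros G cont)
    moreover have "integral {c..d} (\<lambda>y. e ^ K * (C * (\<bar>G y\<bar> * \<bar>y\<bar> ^ K))) = B * e ^ K"
      unfolding integral_mult_right B_def by (simp add: mult_ac)
    ultimately show ?thesis
      by (simp only: real_norm_def)
  qed
  then show ?thesis
    unfolding D_def by blast
qed

lemma eps_expansion_from_moments: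
  fixes G \<psi> :: "real \<Rightarrow> real"
  assumes "continuous_on {c..d} G" "\<forall>j<n. integral {c..d} (\<lambda>y. G y * y ^ j) = 0"
    and "p \<le> int n" "schwartz \<psi>"
  shows "eps_expansion_from p (\<lambda>e. integral {c..d} (\<lambda>y. G y * \<psi> (a + e * y)))"
proof (rule eps_expansion_fromI)
  let ?z = "\<lambda>k. (deriv ^^ k) \<psi> a / fact k * integral {c..d} (\<lambda>y. G y * y ^ k)"
  show "?z k = 0" if "int k < p" for k
    using assms(2,3) that by simp
  show "\<exists>B. \<forall>e\<in>{0<..<1}. \<bar>integral {c..d} (\<lambda>y. G y * \<psi> (a + e * y)) - (\<Sum>k<K. ?z k * e ^ k)\<bar>
          \<le> B * e ^ K" for K
    using moment_expansion_bound[OF assms(1,4), of a K] by (meson greaterThanLessThan_iff)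
qed

lemma has_integral_rescale:
  fixes H :: "real \<Rightarrow> real"
  assumes H: "continuous_on UNIV H" "vanishes_outside H {c..d}" and e: "e > 0"
  shows "((\<lambda>x. H ((x - a) / e)) has_integral (e * integral {c..d} H)) UNIV"
proof -
  have "(H has_integral integral {c..d} H) (cbox c d)"
    using integrable_continuous_interval[OF continuous_on_subset[OF H(1)]]
    by (simp add: integrable_integral)
  from has_integral_affinity'[OF this, of "1 / e" "- a / e"] e
  have "((\<lambda>x. H ((1 / e) * x + - a / e)) has_integral integral {c..d} H /\<^sub>R (1 / e))
          {(c - - a / e) /\<^sub>R (1 / e) .. (d - - a / e) /\<^sub>R (1 / e)}"
    by simp
  moreover have "(\<lambda>x. H ((1 / e) * x + - a / e)) = (\<lambda>x. H ((x - a) / e))"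
    and "(c - - a / e) /\<^sub>R (1 / e) = e * c + a" "(d - - a / e) /\<^sub>R (1 / e) = e * d + a"
    and "integral {c..d} H /\<^sub>R (1 / e) = e * integral {c..d} H"
    using e by (auto simp: field_simps)
  ultimately have "((\<lambda>x. H ((x - a) / e)) has_integral (e * integral {c..d} H)) {e * c + a .. e * d + a}"
    by simp
  then show ?thesis
    by (rule has_integral_on_superset)
       (use H(2) e in \<open>auto simp: vanishes_outside_def field_simps\<close>)
qed

lemma has_integral_rescaled_pairing:
  fixes G \<psi> :: "real \<Rightarrow> real"
  assumes "continuous_on UNIV G" "vanishes_outside G {c..d}" "continuous_on UNIV \<psi>" "e > 0"
  shows "((\<lambda>x. G ((x - a) / e) / e * \<psi> x) has_integral integral {c..d} (\<lambda>y. G y * \<psi> (a + e * y))) UNIV"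
proof -
  let ?H = "\<lambda>y. G y * \<psi> (a + e * y)"
  have "((\<lambda>x. ?H ((x - a) / e)) has_integral (e * integral {c..d} ?H)) UNIV"
    by (intro has_integral_rescale continuous_intros continuous_on_compose2[OF assms(3)] assms(1,4))
       (use assms(2) in \<open>auto simp: vanishes_outside_def\<close>)
  from has_integral_mult_right[OF this, of "1 / e"] show ?thesis
    using \<open>e > 0\<close> by (simp add: field_simps)
qed

definition vanishing_moments :: "nat \<Rightarrow> (real \<Rightarrow> real) \<Rightarrow> bool" where
  "vanishing_moments n G \<longleftrightarrow> continuous_on UNIV G \<and> (\<exists>c d. vanishes_outside G {c..d}) \<and>
     (\<forall>j<n. ((\<lambda>y. G y * y ^ j) has_integral 0) UNIV)"

lemma rescaled_pairing_expansion:
  fixes G \<psi> :: "real \<Rightarrow> real" and E :: "real \<Rightarrow> real \<Rightarrow> real"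
  assumes G: "vanishing_moments n G" and "p \<le> int n" and \<psi>: "schwartz \<psi>"
    and E: "\<And>e x. e > 0 \<Longrightarrow> E e x = G ((x - a) / e) / e"
  shows "(\<forall>e\<in>{0<..1}. (\<lambda>x. E e x * \<psi> x) integrable_on UNIV) \<and>
         eps_expansion_from p (\<lambda>e. integral UNIV (\<lambda>x. E e x * \<psi> x))"
proof -
  obtain c d where Gc: "continuous_on UNIV G" and Gs: "vanishes_outside G {c..d}"
    and mom: "\<And>j. j < n \<Longrightarrow> ((\<lambda>y. G y * y ^ j) has_integral 0) UNIV"
    using G unfolding vanishing_moments_def by blast
  have pairing: "((\<lambda>x. E e x * \<psi> x) has_integral integral {c..d} (\<lambda>y. G y * \<psi> (a + e * y))) UNIV"
    if "e > 0" for e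
    using has_integral_rescaled_pairing[OF Gc Gs schwartz_continuous_on[OF \<psi>] that]
    by (simp add: E that)
  have "integral {c..d} (\<lambda>y. G y * y ^ j) = 0" if "j < n" for j
  proof -
    have "((\<lambda>y. G y * y ^ j) has_integral integral {c..d} (\<lambda>y. G y * y ^ j)) UNIV"
      by (rule has_integral_UNIV_if_vanishes_outside)
         (use Gc Gs in \<open>auto intro!: continuous_intros simp: vanishes_outside_def\<close>)
    then show ?thesis
      using mom[OF that] by (rule has_integral_unique)
  qed
  then have "eps_expansion_from p (\<lambda>e. integral {c..d} (\<lambda>y. G y * \<psi> (a + e * y)))"
    using Gc assms(2) \<psi> by (intro eps_expansion_from_moments) (auto intro: continuous_on_subset)
  then have "eps_expansion_from p (\<lambda>e. integral UNIV (\<lambda>x. E e x * \<psi> x))"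
    by (rule eps_expansion_from_cong[rotated])
       (auto intro!: eventually_at_rightI[where b = 1] integral_unique[symmetric] pairing)
  moreover have "\<forall>e\<in>{0<..1}. (\<lambda>x. E e x * \<psi> x) integrable_on UNIV"
    by (auto intro: has_integral_integrable[OF pairing])
  ultimately show ?thesis by blast
qed

section \<open>Bump trains\<close>

lemma alternating_binomial_power_sum:
  "q < n \<Longrightarrow> (\<Sum>i\<le>n. (-1) ^ i * real (n choose i) * (a + real i) ^ q) = 0"
proof (induction q arbitrary: n a)
  case 0
  then show ?case using choose_alternating_sum[of n] by simp
next
  case (Suc q)
  then obtain m where m: "n = Suc m" "q < m" by (cases n) auto
  have "(\<Sum>i\<le>n. (-1) ^ i * real (n choose i) * real i * (a + real i) ^ q)
        = (\<Sum>i\<le>m. (-1) ^ Suc i * real (Suc i * (Suc m choose Suc i)) * (a + real (Suc i)) ^ q)"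
    unfolding m(1) sum.atMost_Suc_shift by (simp add: algebra_simps del: binomial_Suc_Suc)
  also have "\<dots> = - real n * (\<Sum>i\<le>m. (-1) ^ i * real (m choose i) * ((a + 1) + real i) ^ q)"
    unfolding Suc_times_binomial m(1) sum_distrib_left
    by (intro sum.cong) (simp_all add: algebra_simps del: binomial_Suc_Suc)
  also have "\<dots> = 0"
    using Suc.IH[OF m(2)] by simp
  finally have "(\<Sum>i\<le>n. (-1) ^ i * real (n choose i) * real i * (a + real i) ^ q) = 0" .
  moreover have "(\<Sum>i\<le>n. (-1) ^ i * real (n choose i) * a * (a + real i) ^ q) = 0"
    using Suc.IH[of n a] Suc.prems by (simp add: sum_distrib_left[symmetric] mult_ac)
  ultimately show ?case
    by (simp add: algebra_simps sum.distrib)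
qed

definition train_weight :: "nat \<Rightarrow> nat \<Rightarrow> real" where
  "train_weight n i = (-1) ^ Suc i * real (n choose i)"

lemma sum_train_weight_power:
  assumes "q < n"
  shows "(\<Sum>i=1..n. train_weight n i * real i ^ q) = (if q = 0 then 1 else 0)"
proof -
  have "{..n} = insert 0 {1..n}" by auto
  then have "0 ^ q + (\<Sum>i=1..n. (-1) ^ i * real (n choose i) * real i ^ q) = 0"
    using alternating_binomial_power_sum[OF assms, of 0] by simp
  then have "(\<Sum>i=1..n. (-1) ^ i * real (n choose i) * real i ^ q) = - (0 ^ q)"
    by linarith
  then show ?thesis
    by (simp add: train_weight_def sum_negf)
qed

definition unit_bump :: "real \<Rightarrow> real" where
  "unit_bump y = bump y / integral {0..1} bump"

lemma smooth_unit_bump: "smooth unit_bump"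
  using smooth_lincomb[OF smooth_bump smooth_bump, of "1 / integral {0..1} bump" 0]
  by (simp add: unit_bump_def[abs_def])

lemma continuous_on_unit_bump: "continuous_on S unit_bump"
  using smooth_continuous_on[OF smooth_unit_bump, of _ 0] by simp

lemma vanishes_outside_unit_bump: "vanishes_outside unit_bump {0..1}"
  using vanishes_outside_bump by (simp add: vanishes_outside_def unit_bump_def)

lemma integral_unit_bump: "integral {0..1} unit_bump = 1"
  using integral_bump_pos by (simp add: unit_bump_def[abs_def])

text \<open>The weights form an \<open>n\<close>-th finite difference, so the moments of order \<open>< n\<close> of
  \<open>bump_train n h\<close> do not depend on the spacing \<open>h\<close>.\<close>

definition bump_train :: "nat \<Rightarrow> real \<Rightarrow> real \<Rightarrow> real" where
  "bump_train n h y = (\<Sum>i=1..n. train_weight n i * unit_bump (y - real i * h))"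

lemma smooth_bump_train: "smooth (bump_train n h)"
  unfolding bump_train_def[abs_def]
proof (rule smooth_sum)
  fix i
  show "smooth (\<lambda>y. train_weight n i * unit_bump (y - real i * h))"
    using smooth_lincomb[OF smooth_affine[OF smooth_unit_bump, of 1 "- real i * h"] smooth_const,
        of "train_weight n i" 0 0]
    by simp
qed simp

lemma continuous_on_bump_train: "continuous_on S (bump_train n h)"
  using smooth_continuous_on[OF smooth_bump_train, of _ 0] by simp

lemma vanishes_outside_bump_train:
  assumes "h > 0"
  shows "vanishes_outside (bump_train n h) {h..real n * h + 1}"
  unfolding vanishes_outside_def
proof (intro allI impI)
  fix y assume y: "y \<notin> {h..real n * h + 1}"
  have "y - real i * h \<notin> {0..1}" if "i \<in> {1..n}" for i
  proof -
    have "h \<le> real i * h" "real i * h \<le> real n * h"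
      using that assms by (auto intro: mult_right_mono)
    with y show ?thesis by auto
  qed
  then show "bump_train n h y = 0"
    using vanishes_outside_unit_bump by (simp add: bump_train_def vanishes_outside_def)
qed

lemma unit_bump_shifted_moment:
  "((\<lambda>y. unit_bump (y - s) * y ^ j) has_integral
      (\<Sum>r\<le>j. real (j choose r) * s ^ (j - r) * integral {0..1} (\<lambda>z. unit_bump z * z ^ r))) UNIV"
proof -
  have "((\<lambda>y. unit_bump ((y - s) / 1) * (((y - s) / 1) + s) ^ j) has_integral
          1 * integral {0..1} (\<lambda>z. unit_bump z * (z + s) ^ j)) UNIV"
    using vanishes_outside_unit_bump
    by (intro has_integral_rescale continuous_intros continuous_on_unit_bump)
       (auto simp: vanishes_outside_def)
  moreover have "integral {0..1} (\<lambda>z. unit_bump z * (z + s) ^ j)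
      = (\<Sum>r\<le>j. integral {0..1} (\<lambda>z. (real (j choose r) * s ^ (j - r)) * (unit_bump z * z ^ r)))"
    unfolding binomial_ring sum_distrib_left
    by (subst integral_sum[symmetric])
       (auto intro!: integral_cong integrable_continuous_interval continuous_intros
         continuous_on_unit_bump simp: mult_ac)
  ultimately show ?thesis
    by simp
qed

lemma bump_train_moment:
  assumes "j < n"
  shows "((\<lambda>y. bump_train n h y * y ^ j) has_integral integral {0..1} (\<lambda>z. unit_bump z * z ^ j)) UNIV"
proof -
  define m where "m r = integral {0..1} (\<lambda>z. unit_bump z * z ^ r)" for r
  have "((\<lambda>y. \<Sum>i=1..n. train_weight n i * (unit_bump (y - real i * h) * y ^ j)) has_integral
         (\<Sum>i=1..n. train_weight n i * (\<Sum>r\<le>j. real (j choose r) * (real i * h) ^ (j - r) * m r))) UNIV"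
    unfolding m_def by (intro has_integral_sum has_integral_mult_right unit_bump_shifted_moment) auto
  moreover have "(\<Sum>i=1..n. train_weight n i * (\<Sum>r\<le>j. real (j choose r) * (real i * h) ^ (j - r) * m r))
      = (\<Sum>r\<le>j. real (j choose r) * h ^ (j - r) * m r * (\<Sum>i=1..n. train_weight n i * real i ^ (j - r)))"
    by (simp add: sum_distrib_left sum_distrib_right power_mult_distrib mult_ac, rule sum.swap)
  moreover have "\<dots> = (\<Sum>r\<le>j. if r = j then m j else 0)"
  proof (rule sum.cong[OF refl])
    fix r assume "r \<in> {..j}"
    then have "j - r < n" and r_eq: "j - r = 0 \<longleftrightarrow> r = j"
      using assms by auto
    from sum_train_weight_power[OF this(1)] r_eq
    show "real (j choose r) * h ^ (j - r) * m r * (\<Sum>i=1..n. train_weight n i * real i ^ (j - r))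
          = (if r = j then m j else 0)"
      by simp
  qed
  ultimately show ?thesis
    by (simp add: m_def bump_train_def sum_distrib_left sum_distrib_right mult_ac)
qed

lemma bump_train_has_integral: "n \<ge> 1 \<Longrightarrow> (bump_train n h has_integral 1) UNIV"
  using bump_train_moment[of 0 n h] integral_unit_bump by simp

section \<open>Shock profiles\<close>

definition staggered_train :: "nat \<Rightarrow> nat \<Rightarrow> real \<Rightarrow> real" where
  "staggered_train n i = bump_train n ((real n + 2) ^ i)"

lemma staggered_train_gap:
  assumes "i < j"
  shows "real n * (real n + 2) ^ i + 1 < (real n + 2) ^ j"
proof -
  have "real n * (real n + 2) ^ i + 1 < (real n + 2) ^ Suc i"
    using one_le_power[of "real n + 2" i] by (simp add: algebra_simps, linarith)
  also have "\<dots> \<le> (real n + 2) ^ j"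
    using assms by (intro power_increasing) auto
  finally show ?thesis .
qed

lemma vanishes_outside_staggered_train:
  "vanishes_outside (staggered_train n i) {(real n + 2) ^ i .. real n * (real n + 2) ^ i + 1}"
  unfolding staggered_train_def by (rule vanishes_outside_bump_train) simp

lemma vanishes_outside_staggered_train_upto:
  assumes "i \<le> m"
  shows "vanishes_outside (staggered_train n i) {1 .. real n * (real n + 2) ^ m + 1}"
proof (rule vanishes_outside_mono[OF vanishes_outside_staggered_train])
  have "(real n + 2) ^ i \<le> (real n + 2) ^ m"
    using assms by (intro power_increasing) auto
  then show "{(real n + 2) ^ i .. real n * (real n + 2) ^ i + 1} \<subseteq> {1 .. real n * (real n + 2) ^ m + 1}"
    using one_le_power[of "real n + 2" i] by (auto intro: order_trans mult_left_mono)
qed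

lemma vanishes_below_staggered_train: "vanishes_outside (staggered_train n i) {1..}"
  using vanishes_outside_staggered_train_upto[of i i n] vanishes_outside_mono by auto

lemma continuous_on_staggered_train: "continuous_on S (staggered_train n i)"
  by (simp add: staggered_train_def continuous_on_bump_train)

lemma staggered_train_nonzero:
  "staggered_train n i y \<noteq> 0 \<Longrightarrow> (real n + 2) ^ i \<le> y \<and> y \<le> real n * (real n + 2) ^ i + 1"
  using vanishes_outside_staggered_train[of n i] by (auto simp: vanishes_outside_def)

lemma staggered_train_disjoint:
  assumes "staggered_train n i y \<noteq> 0" "j \<noteq> i"
  shows "staggered_train n j y = 0"
proof (rule ccontr)
  assume "staggered_train n j y \<noteq> 0"
  with assms show False
    using staggered_train_nonzero staggered_train_gap[of i j n] staggered_train_gap[of j i n]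
    by (cases "i < j") (fastforce dest!: staggered_train_nonzero)+
qed

lemma prim_staggered_train_later:
  assumes "staggered_train n i y \<noteq> 0" "i < j"
  shows "prim (staggered_train n j) y = 0"
  using staggered_train_nonzero[OF assms(1)] staggered_train_gap[OF assms(2), of n]
  by (intro prim_eq_0[OF continuous_on_staggered_train vanishes_outside_mono[OF
        vanishes_outside_staggered_train]]) auto

lemma prim_staggered_train_earlier:
  assumes "n \<ge> 1" "staggered_train n i y \<noteq> 0" "j < i"
  shows "prim (staggered_train n j) y = 1"
proof -
  have "prim (staggered_train n j) y = integral UNIV (staggered_train n j)"
    using staggered_train_nonzero[OF assms(2)] staggered_train_gap[OF assms(3), of n]
    by (intro prim_eq_integral_UNIV[OF continuous_on_staggered_train
          vanishes_outside_staggered_train]) auto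
  also have "\<dots> = 1"
    using bump_train_has_integral[OF assms(1)] by (simp add: staggered_train_def integral_unique)
  finally show ?thesis .
qed

lemma eq_sum_staggered_trains:
  assumes "\<And>i. i < m \<Longrightarrow> staggered_train n i y \<noteq> 0 \<Longrightarrow> g = a i * staggered_train n i y"
    and "(\<forall>i<m. staggered_train n i y = 0) \<Longrightarrow> g = 0"
  shows "g = (\<Sum>i<m. a i * staggered_train n i y)"
proof (cases "\<exists>i<m. staggered_train n i y \<noteq> 0")
  case True
  then obtain i where i: "i < m" "staggered_train n i y \<noteq> 0" by blast
  have "(\<Sum>j<m. a j * staggered_train n j y) = (\<Sum>j<m. if j = i then a i * staggered_train n i y else 0)"
    by (rule sum.cong) (auto simp: staggered_train_disjoint[OF i(2)])
  with i assms(1) show ?thesis by simp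
next
  case False
  with assms(2) show ?thesis by simp
qed

lemma vanishing_moments_staggered_trains:
  assumes "(\<Sum>i<m. a i) = 0"
  shows "vanishing_moments n (\<lambda>y. \<Sum>i<m. a i * staggered_train n i y)"
  unfolding vanishing_moments_def
proof (intro conjI allI impI exI)
  show "continuous_on UNIV (\<lambda>y. \<Sum>i<m. a i * staggered_train n i y)"
    by (intro continuous_intros continuous_on_staggered_train)
  show "vanishes_outside (\<lambda>y. \<Sum>i<m. a i * staggered_train n i y) {1 .. real n * (real n + 2) ^ m + 1}"
    using vanishes_outside_staggered_train_upto[of _ m n] by (auto simp: vanishes_outside_def)
  fix j assume "j < n"
  then have "((\<lambda>y. \<Sum>i<m. a i * (staggered_train n i y * y ^ j)) has_integral
              (\<Sum>i<m. a i * integral {0..1} (\<lambda>z. unit_bump z * z ^ j))) UNIV"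
    unfolding staggered_train_def by (intro has_integral_sum has_integral_mult_right bump_train_moment) auto
  then show "((\<lambda>y. (\<Sum>i<m. a i * staggered_train n i y) * y ^ j) has_integral 0) UNIV"
    using assms by (simp add: sum_distrib_left mult_ac flip: sum_distrib_right)
qed

lemma vanishing_moments_if_local_multiples:
  assumes "(\<Sum>i<m. a i) = 0"
    and "\<And>i y. i < m \<Longrightarrow> staggered_train n i y \<noteq> 0 \<Longrightarrow> G y = a i * staggered_train n i y"
    and "\<And>y. \<forall>i<m. staggered_train n i y = 0 \<Longrightarrow> G y = 0"
  shows "vanishing_moments n G"
proof -
  have "G = (\<lambda>y. \<Sum>i<m. a i * staggered_train n i y)"
    using assms(2,3) by (intro ext eq_sum_staggered_trains) auto
  then show ?thesis
    using vanishing_moments_staggered_trains[OF assms(1)] by simp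
qed

lemma smooth_staggered_train: "smooth (staggered_train n i)"
  by (simp add: staggered_train_def smooth_bump_train)

lemma schwartz_staggered_train: "schwartz (staggered_train n i)"
  by (rule schwartz_if_smooth_vanishes_outside[OF smooth_staggered_train
        vanishes_outside_staggered_train])

lemma staggered_train_has_integral: "n \<ge> 1 \<Longrightarrow> (staggered_train n i has_integral 1) UNIV"
  by (simp add: staggered_train_def bump_train_has_integral)

lemma prim_staggered_train_has_derivative:
  "(prim (staggered_train n i) has_real_derivative staggered_train n i y) (at y)"
  by (rule prim_has_derivative[OF continuous_on_staggered_train vanishes_below_staggered_train])

definition two_trains :: "nat \<Rightarrow> real \<Rightarrow> nat \<Rightarrow> nat \<Rightarrow> real \<Rightarrow> real" where
  "two_trains n \<theta> i j y = \<theta> * staggered_train n i y + (1 - \<theta>) * staggered_train n j y"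

lemma schwartz_two_trains: "schwartz (two_trains n \<theta> i j)"
proof -
  have "vanishes_outside (staggered_train n i) {1 .. real n * (real n + 2) ^ max i j + 1}"
    and "vanishes_outside (staggered_train n j) {1 .. real n * (real n + 2) ^ max i j + 1}"
    by (simp_all add: vanishes_outside_staggered_train_upto)
  then show ?thesis
    unfolding two_trains_def[abs_def]
    by (rule schwartz_if_smooth_vanishes_outside[OF smooth_lincomb[OF smooth_staggered_train
          smooth_staggered_train] vanishes_outside_lincomb])
qed

lemma two_trains_has_integral:
  assumes "n \<ge> 1"
  shows "(two_trains n \<theta> i j has_integral 1) UNIV"
proof -
  have "(two_trains n \<theta> i j has_integral \<theta> * 1 + (1 - \<theta>) * 1) UNIV"
    unfolding two_trains_def[abs_def] using assms
    by (intro has_integral_add has_integral_mult_right staggered_train_has_integral)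
  then show ?thesis by simp
qed

lemma prim_two_trains:
  "prim (two_trains n \<theta> i j) y = \<theta> * prim (staggered_train n i) y + (1 - \<theta>) * prim (staggered_train n j) y"
  unfolding two_trains_def[abs_def]
  by (rule prim_lincomb[OF continuous_on_staggered_train continuous_on_staggered_train
        vanishes_below_staggered_train vanishes_below_staggered_train])

lemma prim_two_trains_has_derivative:
  "(prim (two_trains n \<theta> i j) has_real_derivative two_trains n \<theta> i j y) (at y)"
  unfolding two_trains_def[abs_def]
  by (intro prim_has_derivative[where a = 1] continuous_intros continuous_on_staggered_train
        vanishes_outside_lincomb vanishes_below_staggered_train)

text \<open>The density first drops to \<open>0\<close>, the velocity jumps while the density vanishes, and then
  the density jumps to \<open>rho + drho\<close>; the stress jumps in two steps around the velocity jump.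
  On the support of each train the other trains vanish and their primitives are \<open>0\<close> or \<open>1\<close>.\<close>

lemma shock_residual_moments:
  fixes u du rho drho dsigma v k \<theta> :: real
  assumes n: "n \<ge> 1" and drho: "drho \<noteq> 0"
    and jump: "rho * du\<^sup>2 * (rho + drho) + dsigma * drho = 0"
    and v: "v = u + du + rho * du / drho"
    and balance: "(u - v) * \<theta> * dsigma + (u + du - v) * (1 - \<theta>) * dsigma = k\<^sup>2 * du"
  defines "Ut \<equiv> staggered_train n 2" and "Rt \<equiv> two_trains n (- rho / drho) 0 3"
    and "St \<equiv> two_trains n \<theta> 1 4"
  shows "vanishing_moments n (\<lambda>y. (u + du * prim Ut y - v) * (drho * Rt y)
                                   + (rho + drho * prim Rt y) * (du * Ut y))"
    and "vanishing_moments n (\<lambda>y. drho * Rt y * (u + du * prim Ut y) * (u + du * prim Ut y - v)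
                                   + (rho + drho * prim Rt y) * (du * Ut y) * (2 * (u + du * prim Ut y) - v)
                                   - dsigma * St y)"
    and "vanishing_moments n (\<lambda>y. (u + du * prim Ut y - v) * (dsigma * St y) - k\<^sup>2 * (du * Ut y))"
proof -
  define P where "P = staggered_train n"
  define w0 where "w0 = u - v"
  define w1 where "w1 = u + du - v"
  define a1 where "a1 = (!) [- rho * w0, 0, 0, (rho + drho) * w1, 0]"
  define a2 where "a2 = (!) [- rho * u * w0, - \<theta> * dsigma, 0, (rho + drho) * (u + du) * w1,
                             - (1 - \<theta>) * dsigma]"
  define a3 where "a3 = (!) [0, w0 * \<theta> * dsigma, - k\<^sup>2 * du, 0, w1 * (1 - \<theta>) * dsigma]"
  define G1 where "G1 y = (u + du * prim Ut y - v) * (drho * Rt y) + (rho + drho * prim Rt y) * (du * Ut y)"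
    for y
  define G2 where "G2 y = drho * Rt y * (u + du * prim Ut y) * (u + du * prim Ut y - v)
    + (rho + drho * prim Rt y) * (du * Ut y) * (2 * (u + du * prim Ut y) - v) - dsigma * St y" for y
  define G3 where "G3 y = (u + du * prim Ut y - v) * (dsigma * St y) - k\<^sup>2 * (du * Ut y)" for y
  note defs = G1_def G2_def G3_def Ut_def Rt_def St_def two_trains_def prim_two_trains
  have on_train: "G1 y = a1 i * P i y \<and> G2 y = a2 i * P i y \<and> G3 y = a3 i * P i y"
    if "i < 5" "P i y \<noteq> 0" for i y
  proof -
    have others: "P j y = 0" "prim (P j) y = (if j < i then 1 else 0)" if "j \<noteq> i" for j
      using \<open>P i y \<noteq> 0\<close> that staggered_train_disjoint prim_staggered_train_earlier[OF n]
        prim_staggered_train_later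
      by (auto simp: P_def)
    from \<open>i < 5\<close> consider "i = 0" | "i = 1" | "i = 2" | "i = 3" | "i = 4" by linarith
    then show ?thesis
      by cases (use others drho in \<open>simp_all add: defs P_def[symmetric] a1_def a2_def a3_def
          w0_def w1_def field_simps power2_eq_square\<close>)
  qed
  have off_trains: "G1 y = 0 \<and> G2 y = 0 \<and> G3 y = 0" if "\<forall>i<5. P i y = 0" for y
  proof -
    have "P 0 y = 0" "P 1 y = 0" "P 2 y = 0" "P 3 y = 0" "P 4 y = 0"
      using that by auto
    then show ?thesis
      by (simp add: defs P_def[symmetric])
  qed
  have sums: "(\<Sum>i<5. a1 i) = 0" "(\<Sum>i<5. a2 i) = 0" "(\<Sum>i<5. a3 i) = 0"
  proof -
    have sum5: "(\<Sum>i<5. f i) = f 0 + f 1 + f 2 + f 3 + f (4 :: nat)" for f :: "nat \<Rightarrow> real"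
      by (simp add: eval_nat_numeral)
    have dsigma: "dsigma = - rho * du\<^sup>2 * (rho + drho) / drho"
      using jump drho by (simp add: field_simps)
    show "(\<Sum>i<5. a1 i) = 0" "(\<Sum>i<5. a2 i) = 0" "(\<Sum>i<5. a3 i) = 0"
      unfolding sum5 a1_def a2_def a3_def using drho balance
      by (simp_all add: w0_def w1_def v dsigma field_simps power2_eq_square)
  qed
  have "vanishing_moments n G1" "vanishing_moments n G2" "vanishing_moments n G3"
    by (rule vanishing_moments_if_local_multiples[OF sums(1)]
          vanishing_moments_if_local_multiples[OF sums(2)]
          vanishing_moments_if_local_multiples[OF sums(3)];
        use on_train off_trains in \<open>auto simp: P_def\<close>)+
  then show "vanishing_moments n (\<lambda>y. (u + du * prim Ut y - v) * (drho * Rt y)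
                                   + (rho + drho * prim Rt y) * (du * Ut y))"
    and "vanishing_moments n (\<lambda>y. drho * Rt y * (u + du * prim Ut y) * (u + du * prim Ut y - v)
                                   + (rho + drho * prim Rt y) * (du * Ut y) * (2 * (u + du * prim Ut y) - v)
                                   - dsigma * St y)"
    and "vanishing_moments n (\<lambda>y. (u + du * prim Ut y - v) * (dsigma * St y) - k\<^sup>2 * (du * Ut y))"
    by (simp_all only: G1_def[abs_def] G2_def[abs_def] G3_def[abs_def])
qed

lemma shock_profiles:
  fixes u du rho drho dsigma v k :: real
  assumes n: "n \<ge> 1" and nz: "du \<noteq> 0" "drho \<noteq> 0" "dsigma \<noteq> 0"
    and jump: "rho * du\<^sup>2 * (rho + drho) + dsigma * drho = 0"
    and v: "v = u + du + rho * du / drho"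
  obtains Ut Rt St where
    "schwartz Ut" "schwartz Rt" "schwartz St"
    "integral UNIV Ut = 1" "integral UNIV Rt = 1" "integral UNIV St = 1"
    "\<And>y. (prim Ut has_real_derivative Ut y) (at y)"
    "\<And>y. (prim Rt has_real_derivative Rt y) (at y)"
    "\<And>y. (prim St has_real_derivative St y) (at y)"
    "vanishing_moments n (\<lambda>y. (u + du * prim Ut y - v) * (drho * Rt y)
                              + (rho + drho * prim Rt y) * (du * Ut y))"
    "vanishing_moments n (\<lambda>y. drho * Rt y * (u + du * prim Ut y) * (u + du * prim Ut y - v)
                              + (rho + drho * prim Rt y) * (du * Ut y) * (2 * (u + du * prim Ut y) - v)
                              - dsigma * St y)"
    "vanishing_moments n (\<lambda>y. (u + du * prim Ut y - v) * (dsigma * St y) - k\<^sup>2 * (du * Ut y))"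
proof -
  \<comment> \<open>Choosing how the stress jump is split between the two sides of the velocity jump balances
    the stress residual.\<close>
  define \<theta> where "\<theta> = ((u + du - v) * dsigma - k\<^sup>2 * du) / (du * dsigma)"
  have "(u - v) * \<theta> * dsigma + (u + du - v) * (1 - \<theta>) * dsigma = k\<^sup>2 * du"
    using nz by (simp add: \<theta>_def field_simps)
  from shock_residual_moments[OF n nz(2) jump v this] show ?thesis
    by (intro that[of "staggered_train n 2" "two_trains n (- rho / drho) 0 3" "two_trains n \<theta> 1 4"]
        schwartz_staggered_train schwartz_two_trains
        prim_staggered_train_has_derivative prim_two_trains_has_derivative
        integral_unique staggered_train_has_integral two_trains_has_integral n)
qed

section \<open>Weak residuals of the travelling wave\<close>

lemma travelling_wave_partials:
  assumes F: "\<And>y. (F has_real_derivative f y) (at y)" and "e \<noteq> 0"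
  shows "pdt (\<lambda>t x. c + m * F ((x - v * t) / e)) t x = - v * (m * f ((x - v * t) / e)) / e"
    and "pdx (\<lambda>t x. c + m * F ((x - v * t) / e)) t x = m * f ((x - v * t) / e) / e"
proof -
  have "((\<lambda>s. c + m * F ((x - v * s) / e)) has_real_derivative - v * (m * f ((x - v * t) / e)) / e) (at t)"
    "((\<lambda>y. c + m * F ((y - v * t) / e)) has_real_derivative m * f ((x - v * t) / e) / e) (at x)"
    using \<open>e \<noteq> 0\<close>
    by (auto intro!: derivative_eq_intros DERIV_chain2[OF F] simp: field_simps)
  then show "pdt (\<lambda>t x. c + m * F ((x - v * t) / e)) t x = - v * (m * f ((x - v * t) / e)) / e"
    and "pdx (\<lambda>t x. c + m * F ((x - v * t) / e)) t x = m * f ((x - v * t) / e) / e"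
    by (simp_all add: pdt_def pdx_def DERIV_imp_deriv)
qed

lemma weak_residuals_expansion:
  fixes E1 E2 E3 :: "real \<Rightarrow> real \<Rightarrow> real \<Rightarrow> real"
  assumes pn: "p \<le> int n"
    and G: "vanishing_moments n G1" "vanishing_moments n G2" "vanishing_moments n G3"
    and E: "\<And>e t x. e \<noteq> 0 \<Longrightarrow> E1 e t x = G1 ((x - v * t) / e) / e"
      "\<And>e t x. e \<noteq> 0 \<Longrightarrow> E2 e t x = G2 ((x - v * t) / e) / e"
      "\<And>e t x. e \<noteq> 0 \<Longrightarrow> E3 e t x = G3 ((x - v * t) / e) / e"
  shows "\<forall>t\<in>S. \<forall>\<psi>. schwartz \<psi> \<longrightarrow> (\<forall>E\<in>{E1, E2, E3}.
           (\<forall>e\<in>{0<..1}. (\<lambda>x. E e t x * \<psi> x) integrable_on UNIV) \<and>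
           eps_expansion_from p (\<lambda>e. integral UNIV (\<lambda>x. E e t x * \<psi> x)))"
proof (intro ballI allI impI)
  fix t \<psi> E assume \<psi>: "schwartz \<psi>" and "E \<in> {E1, E2, E3}"
  then obtain G where "vanishing_moments n G" "\<And>e x. e > 0 \<Longrightarrow> E e t x = G ((x - v * t) / e) / e"
    using G E by (elim insertE emptyE) auto
  from rescaled_pairing_expansion[OF this(1) pn \<psi>, of "\<lambda>e x. E e t x"] this(2)
  show "(\<forall>e\<in>{0<..1}. (\<lambda>x. E e t x * \<psi> x) integrable_on UNIV) \<and>
        eps_expansion_from p (\<lambda>e. integral UNIV (\<lambda>x. E e t x * \<psi> x))"
    by blast
qed

lemma jump_conditions_solvable:
  fixes k :: real
  obtains du rho0 drho dsigma :: real
  where "du \<noteq> 0" "drho \<noteq> 0" "dsigma \<noteq> 0"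
    "rho0 * du\<^sup>2 * (rho0 + drho) + dsigma * drho = 0"
    "dsigma * (rho0 + drho / 2) + k\<^sup>2 * drho = 0"
proof (cases "k = 0")
  case True
  show ?thesis
    by (rule that[of 1 2 "1 / 2" "-1"]) (simp_all add: True)
next
  case False
  show ?thesis
    by (rule that[of "k / sqrt 3" 1 "- 2 * k\<^sup>2 / 3" 1]) (simp_all add: False power_divide)
qed

theorem theorem5:
  fixes T k :: real and p :: int
  assumes "T > 0"
  shows "\<exists>u0 du rho0 drho sigma0 dsigma v :: real. \<exists>Ut Rt St :: real \<Rightarrow> real.
    du \<noteq> 0 \<and> drho \<noteq> 0 \<and> dsigma \<noteq> 0 \<and>
    schwartz Ut \<and> schwartz Rt \<and> schwartz St \<and>
    integral UNIV Ut = 1 \<and> integral UNIV Rt = 1 \<and> integral UNIV St = 1 \<and>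
    (let u = (\<lambda>\<epsilon> t x. u0 + du * prim Ut ((x - v * t) / \<epsilon>));
         \<rho> = (\<lambda>\<epsilon> t x. rho0 + drho * prim Rt ((x - v * t) / \<epsilon>));
         \<sigma> = (\<lambda>\<epsilon> t x. sigma0 + dsigma * prim St ((x - v * t) / \<epsilon>));
         E1 = (\<lambda>\<epsilon> t x. pdt (\<rho> \<epsilon>) t x + pdx (\<rho> \<epsilon>) t x * u \<epsilon> t x
                        + \<rho> \<epsilon> t x * pdx (u \<epsilon>) t x);
         E2 = (\<lambda>\<epsilon> t x. pdt (\<rho> \<epsilon>) t x * u \<epsilon> t x + \<rho> \<epsilon> t x * pdt (u \<epsilon>) t x
                        + pdx (\<rho> \<epsilon>) t x * (u \<epsilon> t x)\<^sup>2
                        + 2 * \<rho> \<epsilon> t x * u \<epsilon> t x * pdx (u \<epsilon>) t x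
                        - pdx (\<sigma> \<epsilon>) t x);
         E3 = (\<lambda>\<epsilon> t x. pdt (\<sigma> \<epsilon>) t x + u \<epsilon> t x * pdx (\<sigma> \<epsilon>) t x
                        - k\<^sup>2 * pdx (u \<epsilon>) t x)
     in \<forall>t\<in>{0..T}. \<forall>\<psi>. schwartz \<psi> \<longrightarrow>
          (\<forall>E\<in>{E1, E2, E3}.
             (\<forall>\<epsilon>\<in>{0<..1}. (\<lambda>x. E \<epsilon> t x * \<psi> x) integrable_on UNIV) \<and>
             eps_expansion_from p (\<lambda>\<epsilon>. integral UNIV (\<lambda>x. E \<epsilon> t x * \<psi> x)))) \<and>
    rho0 * du\<^sup>2 * (rho0 + drho) + dsigma * drho = 0 \<and>
    dsigma * (rho0 + drho / 2) + k\<^sup>2 * drho = 0 \<and>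
    v = u0 + du + rho0 * du / drho"
proof -
  obtain du rho0 drho dsigma where nz: "du \<noteq> 0" "drho \<noteq> 0" "dsigma \<noteq> 0"
    and jump: "rho0 * du\<^sup>2 * (rho0 + drho) + dsigma * drho = 0"
      "dsigma * (rho0 + drho / 2) + k\<^sup>2 * drho = 0"
    by (rule jump_conditions_solvable)
  define v where "v = 0 + du + rho0 * du / drho"
  define n where "n = nat p + 1"
  have n: "n \<ge> 1" and pn: "p \<le> int n"
    by (simp_all add: n_def)
  show ?thesis
  proof (rule shock_profiles[OF n nz jump(1) v_def, where k = k], goal_cases)
    case (1 Ut Rt St)
    note profiles = "1"(1-6) and derivs = "1"(7-9) and moments = "1"(10-12)
    \<comment> \<open>The partial derivatives are rewritten before \<open>simp\<close> can remove the summand \<open>0 + _\<close>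
      that the pattern of \<open>travelling_wave_partials\<close> relies on.\<close>
    show ?case
      unfolding Let_def
      by (rule exI[of _ 0], rule exI[of _ du], rule exI[of _ rho0], rule exI[of _ drho],
          rule exI[of _ 0], rule exI[of _ dsigma], rule exI[of _ v], rule exI[of _ Ut],
          rule exI[of _ Rt], rule exI[of _ St],
          intro conjI nz profiles jump v_def weak_residuals_expansion[OF pn moments, where v = v])
         (simp_all only: travelling_wave_partials[OF derivs(1)] travelling_wave_partials[OF derivs(2)]
            travelling_wave_partials[OF derivs(3)] not_False_eq_True,
          simp_all add: field_simps power2_eq_square)
  qed
qed

end
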